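(* Let $\Sigma$ be a finite set of symbols, let $\mathbf{x}\in\Sigma^*$, and let $S=\{(T_1,\delta_1),\dots,(T_n,\delta_n)\}$ be a perturbation space with $T_k=(\varphi_k,f_k)$, $\varphi_k:\Sigma^{s_k}\to\{0,1\}$, $f_k:\Sigma^{s_k}\to 2^{\Sigma^{t_k}}$, $s_k\ge 1$, $t_k\ge 0$. For $S'\in\mathcal{D}(S)$ and integers $i,j$ let $$H_{i,j}^{S'}=\{\mathrm{lstm}(\mathbf{z},h_0)\mid \mathbf{z}\in S'^{=}(\mathbf{x}_{1:j}),\ |\mathbf{z}|=i\},$$ with the convention $H_{i,j}^{S'}=\emptyset$ whenever $i<0$ or $j<0$. Then $H_{0,0}^{\varnothing}=\{0^d\}$, and for every $S'=\{(T_k,\delta'_k)\}_k\in\mathcal{D}(S)$ and all integers $i\ge 0$, $j\ge 1$, $$H_{i,j}^{S'}=\{\mathrm{lstm}(x_j,h)\mid h\in H_{i-1,j-1}^{S'}\}\ \cup \bigcup_{\substack{1\le k\le n,\ \delta'_k\ge 1,\ j\ge s_k\\ \varphi_k(\mathbf{x}_{j-s_k+1:j})=1}}\{\mathrm{lstm}(\mathbf{z},h)\mid \mathbf{z}\in f_k(\mathbf{x}_{j-s_k+1:j}),\ h\in H_{i-t_k,\,j-s_k}^{S'_{k\downarrow}}\}.$$ That is, the sets $H_{i,j}^{S'}$ defined directly coincide with those computed bottom-up from the base case $H_{0,0}^{\varnothing}=\{0^d\}$ by this recurrence.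
   Context: Strings: $\Sigma^*$ is the set of finite strings over $\Sigma$; for $\mathbf{x}\in\Sigma^*$, $x_i$ is its $i$-th symbol, $\mathbf{x}_{a:b}=x_a\cdots x_b$ (empty if $b<a$), $|\mathbf{x}|$ its length, $\epsilon$ the empty string. A string transformation is a pair $T=(\varphi,f)$ with match function $\varphi:\Sigma^{s}\to\{0,1\}$ and replace function $f:\Sigma^{s}\to 2^{\Sigma^{t}}$. A perturbation space is a finite set $S=\{(T_1,\delta_1),\dots,(T_n,\delta_n)\}$ with $\delta_k\in\mathbb{N}$. Its tight version $S^{=}$ maps a string $\mathbf{x}$ to the set $S^{=}(\mathbf{x})$ of all strings $\mathbf{z}$ for which there is a factorization $\mathbf{x}=\mathbf{u}_0\mathbf{w}_1\mathbf{u}_1\cdots\mathbf{w}_m\mathbf{u}_m$ (pairwise non-overlapping matched substrings $\mathbf{w}_l$) and indices $k_1,\dots,k_m$ with $\varphi_{k_l}(\mathbf{w}_l)=1$, $\mathbf{z}=\mathbf{u}_0\mathbf{w}'_1\mathbf{u}_1\cdots\mathbf{w}'_m\mathbf{u}_m$ with $\mathbf{w}'_l\in f_{k_l}(\mathbf{w}_l)$, and such that for each $k$ exactly $\delta_k$ of the $k_l$ equal $k$ (the ordinary space $S(\mathbf{x})$ is defined the same way with "at most $\delta_k$"). The decomposition $\mathcal{D}(S)$ is the set of all perturbation spaces $\{(T_1,\delta'_1),\dots,(T_n,\delta'_n)\}$ with $0\le\delta'_k\le\delta_k$ (so $|\mathcal{D}(S)|=\prod_k(\delta_k+1)$); $\varnothing$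 denotes the element with all $\delta'_k=0$, for which $\varnothing^{=}(\mathbf{x})=\{\mathbf{x}\}$. For $S'\in\mathcal{D}(S)$ with $\delta'_k\ge1$, $S'_{k\downarrow}$ is $S'$ with $\delta'_k$ decreased by $1$. LSTM: $\mathrm{lstm}:\Sigma\times\mathbb{R}^d\to\mathbb{R}^d$ is a fixed function (an LSTM cell applied to the symbol's embedding and the concatenated hidden/cell state); it is extended to strings by $\mathrm{lstm}(\epsilon,h)=h$ and $\mathrm{lstm}(\mathbf{z},h)=\mathrm{lstm}(z_{|\mathbf{z}|},\mathrm{lstm}(\mathbf{z}_{1:|\mathbf{z}|-1},h))$; $h_0=0^d$. *)

theory Defs
  imports "HOL-Analysis.Analysis"
begin

text \<open>A perturbation space with n transformations
  is given by index-k families: match functions phi k, replace functions f k, match length s k,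
  replacement length t k, budgets delta k (k < n).  A decomposition element is a budget
  function D with D k \<le> delta k for k < n.\<close>

text \<open>Tight perturbation space: z arises from x by replacing pairwise non-overlapping matched
  substrings, with transformation k used exactly D k times. The factorization
  x = u0 w1 u1 ... wm um is represented by u0 and the list ps = [(w1,u1),...,(wm,um)].\<close>
definition tight_space ::
  "nat \<Rightarrow> (nat \<Rightarrow> 'a list \<Rightarrow> bool) \<Rightarrow> (nat \<Rightarrow> 'a list \<Rightarrow> 'a list set) \<Rightarrow> (nat \<Rightarrow> nat)
   \<Rightarrow> (nat \<Rightarrow> nat) \<Rightarrow> 'a list \<Rightarrow> 'a list set" where
  "tight_space n phi f s D x = {z. \<exists>u0 ps ks ws'.
      length ks = length ps \<and> length ws' = length ps \<and>
      x = u0 @ concat (map (\<lambda>(w, u). w @ u) ps) \<and>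
      z = u0 @ concat (map2 (\<lambda>w' (w, u). w' @ u) ws' ps) \<and>
      (\<forall>l < length ps. ks ! l < n \<and> length (fst (ps ! l)) = s (ks ! l) \<and>
          phi (ks ! l) (fst (ps ! l)) \<and> ws' ! l \<in> f (ks ! l) (fst (ps ! l))) \<and>
      (\<forall>k < n. length (filter (\<lambda>k'. k' = k) ks) = D k)}"

definition lstm_str :: "('a \<Rightarrow> 'h \<Rightarrow> 'h) \<Rightarrow> 'a list \<Rightarrow> 'h \<Rightarrow> 'h" where
  "lstm_str cell z h = fold cell z h"

text \<open>Substring x_{a:b} (1-based, inclusive), empty if b < a.\<close>
definition substr :: "'a list \<Rightarrow> int \<Rightarrow> int \<Rightarrow> 'a list" where
  "substr x a b = drop (nat (a - 1)) (take (nat b) x)"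

definition Hset ::
  "('a \<Rightarrow> real^'d \<Rightarrow> real^'d) \<Rightarrow> nat \<Rightarrow> (nat \<Rightarrow> 'a list \<Rightarrow> bool) \<Rightarrow> (nat \<Rightarrow> 'a list \<Rightarrow> 'a list set)
   \<Rightarrow> (nat \<Rightarrow> nat) \<Rightarrow> 'a list \<Rightarrow> (nat \<Rightarrow> nat) \<Rightarrow> int \<Rightarrow> int \<Rightarrow> (real^'d) set" where
  "Hset cell n phi f s x D i j =
     (if i < 0 \<or> j < 0 then {}
      else {lstm_str cell z 0 | z. z \<in> tight_space n phi f s D (substr x 1 j) \<and> int (length z) = i})"

end

theory Submission
  imports Defs
begin

text \<open>Every tight perturbation of a nonempty string arises from a tight perturbation of a prefix
  in one of two ways: the last symbol is kept, or the last \<open>s k\<close> symbols are a match of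
  transformation \<open>k\<close> and are replaced by an element of \<open>f k\<close>, leaving one use of \<open>k\<close> fewer for
  the prefix. Characterising the tight space inductively by these two steps, the recurrence for
  \<open>H\<close> follows because the LSTM processes \<open>z @ w\<close> by running on \<open>w\<close> from the state reached
  after \<open>z\<close>.\<close>

inductive tight_perturbation ::
  "nat \<Rightarrow> (nat \<Rightarrow> 'a list \<Rightarrow> bool) \<Rightarrow> (nat \<Rightarrow> 'a list \<Rightarrow> 'a list set) \<Rightarrow> (nat \<Rightarrow> nat)
   \<Rightarrow> (nat \<Rightarrow> nat) \<Rightarrow> 'a list \<Rightarrow> 'a list \<Rightarrow> bool"
  for n phi f s where
  empty: "(\<forall>k < n. D k = 0) \<Longrightarrow> tight_perturbation n phi f s D [] []"
| keep: "tight_perturbation n phi f s D y z \<Longrightarrow> tight_perturbation n phi f s D (y @ [c]) (z @ [c])"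
| replace: "\<lbrakk>k < n; 1 \<le> D k; length w = s k; phi k w; w' \<in> f k w;
    tight_perturbation n phi f s (D(k := D k - 1)) y z\<rbrakk>
   \<Longrightarrow> tight_perturbation n phi f s D (y @ w) (z @ w')"

lemma tight_perturbation_append_same:
  "tight_perturbation n phi f s D y z \<Longrightarrow> tight_perturbation n phi f s D (y @ u) (z @ u)"
  by (induction u rule: rev_induct) (auto simp flip: append_assoc intro: tight_perturbation.keep)

lemma tight_perturbation_if_factorization:
  assumes "length ks = length ps" and "length ws' = length ps"
    and "\<forall>l < length ps. ks ! l < n \<and> length (fst (ps ! l)) = s (ks ! l) \<and>
          phi (ks ! l) (fst (ps ! l)) \<and> ws' ! l \<in> f (ks ! l) (fst (ps ! l))"
    and "\<forall>k < n. length (filter (\<lambda>k'. k' = k) ks) = D k"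
  shows "tight_perturbation n phi f s D (u0 @ concat (map (\<lambda>(w, u). w @ u) ps))
           (u0 @ concat (map2 (\<lambda>w' (w, u). w' @ u) ws' ps))"
  using assms
proof (induction ps arbitrary: ks ws' D rule: rev_induct)
  case Nil
  then show ?case
    using tight_perturbation_append_same[OF tight_perturbation.empty, where u = u0] by simp
next
  case (snoc p ps)
  obtain w u where p: "p = (w, u)" by fastforce
  from snoc.prems obtain ks0 k ws0 w' where ks: "ks = ks0 @ [k]" and ws': "ws' = ws0 @ [w']"
    by (metis length_append_singleton rev_exhaust list.size(3) nat.distinct(1))
  have len: "length ks0 = length ps" "length ws0 = length ps"
    using snoc.prems(1,2) ks ws' by simp_all
  have last: "k < n" "length w = s k" "phi k w" "w' \<in> f k w"
    using snoc.prems(3)[rule_format, of "length ps"] ks ws' p len by (simp_all add: nth_append)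
  have "1 \<le> D k"
    using snoc.prems(4) last(1) ks by force
  moreover have "tight_perturbation n phi f s (D(k := D k - 1))
      (u0 @ concat (map (\<lambda>(w, u). w @ u) ps)) (u0 @ concat (map2 (\<lambda>w' (w, u). w' @ u) ws0 ps))"
  proof (rule snoc.IH[OF len])
    show "\<forall>l < length ps. ks0 ! l < n \<and> length (fst (ps ! l)) = s (ks0 ! l) \<and>
          phi (ks0 ! l) (fst (ps ! l)) \<and> ws0 ! l \<in> f (ks0 ! l) (fst (ps ! l))"
    proof (intro allI impI)
      fix l assume "l < length ps"
      then show "ks0 ! l < n \<and> length (fst (ps ! l)) = s (ks0 ! l) \<and>
          phi (ks0 ! l) (fst (ps ! l)) \<and> ws0 ! l \<in> f (ks0 ! l) (fst (ps ! l))"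
        using snoc.prems(3)[rule_format, of l] ks ws' len by (simp add: nth_append)
    qed
    show "\<forall>k' < n. length (filter (\<lambda>k''. k'' = k') ks0) = (D(k := D k - 1)) k'"
      using snoc.prems(4) ks by auto
  qed
  ultimately have "tight_perturbation n phi f s D ((u0 @ concat (map (\<lambda>(w, u). w @ u) ps)) @ w)
           ((u0 @ concat (map2 (\<lambda>w' (w, u). w' @ u) ws0 ps)) @ w')"
    using last by (blast intro: tight_perturbation.replace)
  from tight_perturbation_append_same[OF this, of u] show ?case
    using ks ws' p len by simp
qed

lemma tight_space_snoc:
  assumes "z \<in> tight_space n phi f s D y"
  shows "z @ [c] \<in> tight_space n phi f s D (y @ [c])"
proof -
  obtain u0 ps ks ws' where len: "length ks = length ps" "length ws' = length ps"
    and y: "y = u0 @ concat (map (\<lambda>(w, u). w @ u) ps)"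
    and z: "z = u0 @ concat (map2 (\<lambda>w' (w, u). w' @ u) ws' ps)"
    and valid: "\<forall>l < length ps. ks ! l < n \<and> length (fst (ps ! l)) = s (ks ! l) \<and>
          phi (ks ! l) (fst (ps ! l)) \<and> ws' ! l \<in> f (ks ! l) (fst (ps ! l))"
    and count: "\<forall>k < n. length (filter (\<lambda>k'. k' = k) ks) = D k"
    using assms unfolding tight_space_def by blast
  show ?thesis
  proof (cases ps rule: rev_cases)
    case Nil
    then show ?thesis
      unfolding tight_space_def using len y z count
      by (intro CollectI exI[of _ "u0 @ [c]"] exI[of _ "[]"]) simp
  next
    case (snoc ps0 p)
    obtain w u where p: "p = (w, u)"
      by fastforce
    obtain ws0 w' where ws': "ws' = ws0 @ [w']"
      using len snoc by (metis length_append_singleton rev_exhaust list.size(3) nat.distinct(1))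
    define ps' where "ps' = ps0 @ [(w, u @ [c])]"
    have "map fst ps' = map fst ps"
      using snoc p by (simp add: ps'_def)
    then have "fst (ps' ! l) = fst (ps ! l)" if "l < length ps" for l
      using that by (metis length_map nth_map)
    moreover have "length ps' = length ps"
      using snoc by (simp add: ps'_def)
    ultimately show ?thesis
      unfolding tight_space_def using len y z valid count snoc ws' p
      by (intro CollectI exI[of _ u0] exI[of _ ps'] exI[of _ ks] exI[of _ ws'])
        (auto simp: ps'_def)
  qed
qed

lemma tight_space_append_replacement:
  assumes "k < n" "1 \<le> D k" "length w = s k" "phi k w" "w' \<in> f k w"
    and "z \<in> tight_space n phi f s (D(k := D k - 1)) y"
  shows "z @ w' \<in> tight_space n phi f s D (y @ w)"
proof -
  obtain u0 ps ks ws' where len: "length ks = length ps" "length ws' = length ps"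
    and y: "y = u0 @ concat (map (\<lambda>(w, u). w @ u) ps)"
    and z: "z = u0 @ concat (map2 (\<lambda>w' (w, u). w' @ u) ws' ps)"
    and valid: "\<forall>l < length ps. ks ! l < n \<and> length (fst (ps ! l)) = s (ks ! l) \<and>
          phi (ks ! l) (fst (ps ! l)) \<and> ws' ! l \<in> f (ks ! l) (fst (ps ! l))"
    and count: "\<forall>k' < n. length (filter (\<lambda>k''. k'' = k') ks) = (D(k := D k - 1)) k'"
    using assms(6) unfolding tight_space_def by blast
  let ?ps = "ps @ [(w, [])]" and ?ks = "ks @ [k]" and ?ws' = "ws' @ [w']"
  have "\<forall>l < length ?ps. ?ks ! l < n \<and> length (fst (?ps ! l)) = s (?ks ! l) \<and>
          phi (?ks ! l) (fst (?ps ! l)) \<and> ?ws' ! l \<in> f (?ks ! l) (fst (?ps ! l))"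
    using valid len assms(1-5) by (auto simp: nth_append less_Suc_eq)
  moreover have "\<forall>k' < n. length (filter (\<lambda>k''. k'' = k') ?ks) = D k'"
    using count assms(2) by auto
  ultimately show ?thesis
    unfolding tight_space_def using len y z
    by (intro CollectI exI[of _ u0] exI[of _ ?ps] exI[of _ ?ks] exI[of _ ?ws']) simp
qed

lemma tight_space_if_tight_perturbation:
  "tight_perturbation n phi f s D y z \<Longrightarrow> z \<in> tight_space n phi f s D y"
proof (induction rule: tight_perturbation.induct)
  case (empty D)
  then show ?case
    unfolding tight_space_def by (intro CollectI exI[of _ "[]"]) simp
next
  case keep
  then show ?case
    by (blast intro: tight_space_snoc)
next
  case replace
  then show ?case
    by (blast intro: tight_space_append_replacement)
qed

lemma tight_space_eq_tight_perturbation: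
  "tight_space n phi f s D y = {z. tight_perturbation n phi f s D y z}"
  by (auto simp: tight_space_def intro!: tight_perturbation_if_factorization
      dest: tight_space_if_tight_perturbation)

lemma tight_perturbation_iff_last_step:
  assumes "y \<noteq> []"
  shows "tight_perturbation n phi f s D y z \<longleftrightarrow>
    (\<exists>z'. z = z' @ [last y] \<and> tight_perturbation n phi f s D (butlast y) z') \<or>
    (\<exists>k w' z'. k < n \<and> 1 \<le> D k \<and> s k \<le> length y \<and> phi k (drop (length y - s k) y) \<and>
       w' \<in> f k (drop (length y - s k) y) \<and> z = z' @ w' \<and>
       tight_perturbation n phi f s (D(k := D k - 1)) (take (length y - s k) y) z')"
    (is "_ \<longleftrightarrow> ?keep \<or> ?replace")
proof
  assume "tight_perturbation n phi f s D y z"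
  then show "?keep \<or> ?replace"
  proof cases
    case empty
    with assms show ?thesis by simp
  next
    case keep
    then show ?thesis by auto
  next
    case (replace k w w' y' z')
    then have "s k \<le> length y" "drop (length y - s k) y = w" "take (length y - s k) y = y'"
      by simp_all
    with replace(2-) have ?replace
      by blast
    then show ?thesis ..
  qed
next
  assume "?keep \<or> ?replace"
  then show "tight_perturbation n phi f s D y z"
  proof
    assume ?keep
    with assms show ?thesis
      by (metis append_butlast_last_id tight_perturbation.keep)
  next
    assume ?replace
    then show ?thesis
      by (metis append_take_drop_id length_drop diff_diff_cancel tight_perturbation.replace)
  qed
qed

lemma lstm_str_append: "lstm_str cell (z @ w) h = lstm_str cell w (lstm_str cell z h)"
  by (simp add: lstm_str_def)

lemma Hset_eq_image:
  "Hset cell n phi f s x D i (int J) =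
     (\<lambda>z. lstm_str cell z 0) ` {z. tight_perturbation n phi f s D (take J x) z \<and> int (length z) = i}"
  by (auto simp: Hset_def substr_def tight_space_eq_tight_perturbation)

lemma tight_perturbation_Nil_no_budget:
  "tight_perturbation n phi f s (\<lambda>_. 0) [] z \<longleftrightarrow> z = []"
proof
  assume "tight_perturbation n phi f s (\<lambda>_. 0) [] z"
  then show "z = []"
    by cases simp_all
qed (simp add: tight_perturbation.empty)

lemma Hset_no_budget_0_0: "Hset cell n phi f s x (\<lambda>_. 0) 0 0 = {0}"
  using Hset_eq_image[of cell n phi f s x "\<lambda>_. 0" 0 0]
  by (simp add: tight_perturbation_Nil_no_budget lstm_str_def)

lemma tight_perturbations_take_eq:
  assumes f_len: "\<forall>k < n. \<forall>w. length w = s k \<longrightarrow> (\<forall>z \<in> f k w. length z = t k)"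
    and J: "1 \<le> J" "J \<le> length x"
  shows "{z. tight_perturbation n phi f s D (take J x) z \<and> int (length z) = i} =
    (\<lambda>z. z @ [x ! (J - 1)]) `
      {z. tight_perturbation n phi f s D (take (J - 1) x) z \<and> int (length z) = i - 1}
    \<union> (\<Union>k \<in> {k. k < n \<and> 1 \<le> D k \<and> s k \<le> J \<and> phi k (drop (J - s k) (take J x))}.
         (\<lambda>(w', z). z @ w') ` (f k (drop (J - s k) (take J x)) \<times>
           {z. tight_perturbation n phi f s (D(k := D k - 1)) (take (J - s k) x) z \<and>
              int (length z) = i - int (t k)}))"
    (is "?Z = ?keep \<union> (\<Union>k \<in> ?K. ?replace k)")
proof -
  have "take J x = take (J - 1) x @ [x ! (J - 1)]"
    using J take_Suc_conv_app_nth[of "J - 1" x] by simp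
  then have y: "take J x \<noteq> []" "length (take J x) = J"
    "last (take J x) = x ! (J - 1)" "butlast (take J x) = take (J - 1) x"
    using J by simp_all
  note last_step = tight_perturbation_iff_last_step[OF y(1), unfolded y(2-4)]
  have len: "length w' = t k" if "k < n" "s k \<le> J" "w' \<in> f k (drop (J - s k) (take J x))" for k w'
  proof -
    have "length (drop (J - s k) (take J x)) = s k"
      using that(2) J by simp
    then show ?thesis
      using f_len that(1,3) by blast
  qed
  show ?thesis
  proof (intro set_eqI iffI)
    fix z assume "z \<in> ?Z"
    then have z: "tight_perturbation n phi f s D (take J x) z" "int (length z) = i"
      by simp_all
    consider
      (keep) z' where "z = z' @ [x ! (J - 1)]" "tight_perturbation n phi f s D (take (J - 1) x) z'"
    | (replace) k w' z' where "k \<in> ?K" "w' \<in> f k (drop (J - s k) (take J x))" "z = z' @ w'"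
        "tight_perturbation n phi f s (D(k := D k - 1)) (take (J - s k) x) z'"
      using z(1) unfolding last_step mem_Collect_eq by (elim disjE exE conjE) simp_all
    then show "z \<in> ?keep \<union> (\<Union>k \<in> ?K. ?replace k)"
    proof cases
      case keep
      then have "z \<in> ?keep"
        using z(2) by (intro image_eqI[of z _ z']) simp_all
      then show ?thesis ..
    next
      case replace
      then have "z \<in> ?replace k"
        using z(2) len[of k w'] by (intro image_eqI[of z _ "(w', z')"]) auto
      then show ?thesis
        using replace(1) by blast
    qed
  next
    fix z assume "z \<in> ?keep \<union> (\<Union>k \<in> ?K. ?replace k)"
    then show "z \<in> ?Z"
    proof (elim UnE UN_E)
      assume "z \<in> ?keep"
      then obtain z' where "z = z' @ [x ! (J - 1)]"
          "tight_perturbation n phi f s D (take (J - 1) x) z'" "int (length z') = i - 1"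
        by blast
      then show ?thesis
        using last_step by simp
    next
      fix k assume "k \<in> ?K" "z \<in> ?replace k"
      then obtain w' z' where "w' \<in> f k (drop (J - s k) (take J x))" "z = z' @ w'"
          "tight_perturbation n phi f s (D(k := D k - 1)) (take (J - s k) x) z'"
          "int (length z') = i - int (t k)"
        by force
      moreover have "length w' = t k"
        using len \<open>k \<in> ?K\<close> calculation(1) by blast
      ultimately show ?thesis
        using last_step \<open>k \<in> ?K\<close> by auto
    qed
  qed
qed

lemma lstm_str_image_snoc:
  "(\<lambda>z. lstm_str cell z h) ` (\<lambda>z. z @ [c]) ` A = cell c ` (\<lambda>z. lstm_str cell z h) ` A"
  by (simp add: image_image lstm_str_append lstm_str_def)

lemma lstm_str_image_append:
  "(\<lambda>z. lstm_str cell z h) ` (\<lambda>(w', z). z @ w') ` (F \<times> A) =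
     {lstm_str cell w' g | w' g. w' \<in> F \<and> g \<in> (\<lambda>z. lstm_str cell z h) ` A}"
  unfolding image_image by (force simp: lstm_str_append)

lemma Hset_recurrence:
  assumes f_len: "\<forall>k < n. \<forall>w. length w = s k \<longrightarrow> (\<forall>z \<in> f k w. length z = t k)"
    and j: "1 \<le> j" "j \<le> int (length x)"
  shows "Hset cell n phi f s x D i j =
    (cell (x ! nat (j - 1))) ` Hset cell n phi f s x D (i - 1) (j - 1)
    \<union> (\<Union>k \<in> {k. k < n \<and> D k \<ge> 1 \<and> j \<ge> int (s k) \<and>
                  phi k (substr x (j - int (s k) + 1) j)}.
         {lstm_str cell z h | z h. z \<in> f k (substr x (j - int (s k) + 1) j) \<and>
            h \<in> Hset cell n phi f s x (D(k := D k - 1)) (i - int (t k)) (j - int (s k))})"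
proof -
  obtain J where J: "j = int J" "1 \<le> J" "J \<le> length x"
    using j by (metis nonneg_int_cases of_nat_le_iff of_nat_1 zero_le_one order_trans)
  have j_pred: "int J - 1 = int (J - 1)" "nat (int J - 1) = J - 1"
    using J by simp_all
  have match: "substr x (j - int (s k) + 1) j = drop (J - s k) (take J x)" "j - int (s k) = int (J - s k)"
    if "int (s k) \<le> j" for k
    using that J by (simp_all add: substr_def nat_diff_distrib)
  have "Hset cell n phi f s x D i j =
    (cell (x ! (J - 1))) ` Hset cell n phi f s x D (i - 1) (int (J - 1))
    \<union> (\<Union>k \<in> {k. k < n \<and> 1 \<le> D k \<and> s k \<le> J \<and> phi k (drop (J - s k) (take J x))}.
         {lstm_str cell z h | z h. z \<in> f k (drop (J - s k) (take J x)) \<and>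
            h \<in> Hset cell n phi f s x (D(k := D k - 1)) (i - int (t k)) (int (J - s k))})"
    unfolding J(1) Hset_eq_image tight_perturbations_take_eq[OF f_len J(2,3)]
    by (simp only: image_Un image_UN lstm_str_image_snoc lstm_str_image_append)
  also have "\<dots> = (cell (x ! nat (j - 1))) ` Hset cell n phi f s x D (i - 1) (j - 1)
    \<union> (\<Union>k \<in> {k. k < n \<and> D k \<ge> 1 \<and> j \<ge> int (s k) \<and>
                  phi k (substr x (j - int (s k) + 1) j)}.
         {lstm_str cell z h | z h. z \<in> f k (substr x (j - int (s k) + 1) j) \<and>
            h \<in> Hset cell n phi f s x (D(k := D k - 1)) (i - int (t k)) (j - int (s k))})"
    using match J(1) by (intro arg_cong2[where f = "(\<union>)"] SUP_cong) (auto simp: J(1) j_pred)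
  finally show ?thesis .
qed

theorem lemma4p2:
  fixes cell :: "'a::finite \<Rightarrow> real^'d \<Rightarrow> real^'d"
    and x :: "'a list"
    and n :: nat
    and phi :: "nat \<Rightarrow> 'a list \<Rightarrow> bool"
    and f :: "nat \<Rightarrow> 'a list \<Rightarrow> 'a list set"
    and s t delta :: "nat \<Rightarrow> nat"
  assumes s_pos: "\<forall>k < n. s k \<ge> 1"
    and f_len: "\<forall>k < n. \<forall>w. length w = s k \<longrightarrow> (\<forall>z \<in> f k w. length z = t k)"
  shows "Hset cell n phi f s x (\<lambda>_. 0) 0 0 = {0}
    \<and> (\<forall>D. (\<forall>k < n. D k \<le> delta k) \<longrightarrow>
        (\<forall>i j. 0 \<le> i \<and> 1 \<le> j \<and> j \<le> int (length x) \<longrightarrow>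
          Hset cell n phi f s x D i j =
            (cell (x ! nat (j - 1))) ` Hset cell n phi f s x D (i - 1) (j - 1)
            \<union> (\<Union>k \<in> {k. k < n \<and> D k \<ge> 1 \<and> j \<ge> int (s k) \<and>
                          phi k (substr x (j - int (s k) + 1) j)}.
                 {lstm_str cell z h | z h. z \<in> f k (substr x (j - int (s k) + 1) j) \<and>
                    h \<in> Hset cell n phi f s x (D(k := D k - 1)) (i - int (t k)) (j - int (s k))})))"
  by (intro conjI allI impI Hset_no_budget_0_0 Hset_recurrence[OF f_len]) auto

end
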